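(* Under the hypotheses of Theorem 3 (a 2-D Lorentzian foliation with $d(H^\flat)=-d(\tilde H^\flat)$, a Lorentzian foliation adapted frame $(e_0,e_1,e_2,e_3)$ on a starlike open set $U$, and the magnetically dominated force-free field $F=u\,e_2^\flat\wedge e_3^\flat$ on $U$ with kernel tangent to the leaves), if the distribution spanned by $e_2$ and $e_3$ is involutive, then $F$ is a vacuum solution, i.e. its current density vector vanishes.
   Context: $(\mathcal M,g)$ is a 4-dimensional spacetime with metric of signature $(-,+,+,+)$ and Levi-Civita connection $\nabla$. An electromagnetic field is a 2-form $F$ with $dF=0$, with current density vector $j^\nu=-\nabla_\mu F^{\mu\nu}$; force-free means $F(j,\chi)=0$ for all $\chi$; magnetically dominated means $F_{\mu\nu}F^{\mu\nu}>0$; vacuum means $j=0$. A 2-D Lorentzian foliation is a foliation by 2-dimensional submanifolds with Lorentzian induced metric; a Lorentzian foliation adapted frame is an orthonormal frame ($g(e_\mu,e_\nu)=\mathrm{diag}(-1,1,1,1)_{\mu\nu}$) with $e_0,e_1$ spanning the leaves' tangent spaces. $H$, $\tilde H$ are defined by $2H=[-g(\nabla_{e_0}e_0,e_2)+g(\nabla_{e_1}e_1,e_2)]e_2+[-g(\nabla_{e_0}e_0,e_3)+g(\nabla_{e_1}e_1,e_3)]e_3$, $2\tilde H=[-g(\nabla_{e_2}e_2,e_0)-g(\nabla_{e_3}e_3,e_0)]e_0+[g(\nabla_{e_2}e_2,e_1)+g(\nabla_{e_3}e_3,e_1)]e_1$. A distribution is involutive if it is closed under the Lie bracket. *)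

theory Defs
  imports "HOL-Analysis.Analysis"
begin

text \<open>Local-coordinate model: the open set U is a subset of a coordinate chart, identified
with an open subset of R^4 = real^4.  Coordinate indices and frame indices range over the
4-element type 4.  Vector fields are maps real^4 => real^4 (coordinate components),
1-forms are maps real^4 => real^4 (covariant components), 2-forms are maps
real^4 => 4 => 4 => real (components F_ab), the metric is g :: real^4 => real^4^4
with components g x $ a $ b.\<close>

type_synonym pt = "real^4"
type_synonym vfield = "real^4 \<Rightarrow> real^4"
type_synonym metric = "real^4 \<Rightarrow> real^4^4"
type_synonym form2 = "real^4 \<Rightarrow> 4 \<Rightarrow> 4 \<Rightarrow> real"

definition pd :: "4 \<Rightarrow> (real^4 \<Rightarrow> real) \<Rightarrow> real^4 \<Rightarrow> real" where
  "pd i f x = frechet_derivative f (at x) (axis i 1)"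

fun Ck :: "nat \<Rightarrow> (real^4) set \<Rightarrow> (real^4 \<Rightarrow> real) \<Rightarrow> bool" where
  "Ck 0 U f = continuous_on U f"
| "Ck (Suc k) U f = ((\<forall>x\<in>U. f differentiable (at x)) \<and> (\<forall>i. Ck k U (pd i f)))"

definition smooth_on :: "(real^4) set \<Rightarrow> (real^4 \<Rightarrow> real) \<Rightarrow> bool" where
  "smooth_on U f \<longleftrightarrow> (\<forall>k. Ck k U f)"

definition smooth_vf :: "(real^4) set \<Rightarrow> vfield \<Rightarrow> bool" where
  "smooth_vf U X \<longleftrightarrow> (\<forall>k. smooth_on U (\<lambda>y. X y $ k))"

definition smooth_metric :: "(real^4) set \<Rightarrow> metric \<Rightarrow> bool" where
  "smooth_metric U g \<longleftrightarrow> (\<forall>a b. smooth_on U (\<lambda>y. g y $ a $ b))"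

definition gdot :: "metric \<Rightarrow> real^4 \<Rightarrow> real^4 \<Rightarrow> real^4 \<Rightarrow> real" where
  "gdot g x v w = (\<Sum>a\<in>UNIV. \<Sum>b\<in>UNIV. g x $ a $ b * v $ a * w $ b)"

definition ginv :: "metric \<Rightarrow> real^4 \<Rightarrow> real^4^4" where
  "ginv g x = matrix_inv (g x)"

definition christ :: "metric \<Rightarrow> real^4 \<Rightarrow> 4 \<Rightarrow> 4 \<Rightarrow> 4 \<Rightarrow> real" where
  "christ g x k i j = (1/2) * (\<Sum>l\<in>UNIV. ginv g x $ k $ l *
      (pd i (\<lambda>y. g y $ l $ j) x + pd j (\<lambda>y. g y $ l $ i) x - pd l (\<lambda>y. g y $ i $ j) x))"

definition cov :: "metric \<Rightarrow> vfield \<Rightarrow> vfield \<Rightarrow> real^4 \<Rightarrow> real^4" where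
  "cov g X Y x = (\<chi> k. (\<Sum>i\<in>UNIV. X x $ i * pd i (\<lambda>y. Y y $ k) x)
      + (\<Sum>i\<in>UNIV. \<Sum>j\<in>UNIV. christ g x k i j * X x $ i * Y x $ j))"

definition lie :: "vfield \<Rightarrow> vfield \<Rightarrow> vfield" where
  "lie X Y x = (\<chi> k. \<Sum>i\<in>UNIV. X x $ i * pd i (\<lambda>y. Y y $ k) x - Y x $ i * pd i (\<lambda>y. X y $ k) x)"

definition involutive2 :: "(real^4) set \<Rightarrow> vfield \<Rightarrow> vfield \<Rightarrow> bool" where
  "involutive2 U X Y \<longleftrightarrow> (\<forall>x\<in>U. lie X Y x \<in> span {X x, Y x})"

definition flat :: "metric \<Rightarrow> vfield \<Rightarrow> real^4 \<Rightarrow> real^4" where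
  "flat g X x = (\<chi> a. \<Sum>b\<in>UNIV. g x $ a $ b * X x $ b)"

definition d1 :: "(real^4 \<Rightarrow> real^4) \<Rightarrow> form2" where
  "d1 \<alpha> x a b = pd a (\<lambda>y. \<alpha> y $ b) x - pd b (\<lambda>y. \<alpha> y $ a) x"

definition wedge :: "(real^4 \<Rightarrow> real^4) \<Rightarrow> (real^4 \<Rightarrow> real^4) \<Rightarrow> form2" where
  "wedge \<alpha> \<beta> x a b = \<alpha> x $ a * \<beta> x $ b - \<alpha> x $ b * \<beta> x $ a"

definition orthonormal_frame :: "(real^4) set \<Rightarrow> metric \<Rightarrow> (4 \<Rightarrow> vfield) \<Rightarrow> bool" where
  "orthonormal_frame U g e \<longleftrightarrow> (\<forall>x\<in>U. \<forall>\<mu> \<nu>.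
      gdot g x (e \<mu> x) (e \<nu> x) = (if \<mu> = \<nu> then (if \<mu> = 0 then -1 else 1) else 0))"

definition Hvec :: "metric \<Rightarrow> (4 \<Rightarrow> vfield) \<Rightarrow> vfield" where
  "Hvec g e x = (1/2) *\<^sub>R
     ((- gdot g x (cov g (e 0) (e 0) x) (e 2 x) + gdot g x (cov g (e 1) (e 1) x) (e 2 x)) *\<^sub>R e 2 x
    + (- gdot g x (cov g (e 0) (e 0) x) (e 3 x) + gdot g x (cov g (e 1) (e 1) x) (e 3 x)) *\<^sub>R e 3 x)"

definition Htil :: "metric \<Rightarrow> (4 \<Rightarrow> vfield) \<Rightarrow> vfield" where
  "Htil g e x = (1/2) *\<^sub>R
     ((- gdot g x (cov g (e 2) (e 2) x) (e 0 x) - gdot g x (cov g (e 3) (e 3) x) (e 0 x)) *\<^sub>R e 0 x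
    + (gdot g x (cov g (e 2) (e 2) x) (e 1 x) + gdot g x (cov g (e 3) (e 3) x) (e 1 x)) *\<^sub>R e 1 x)"

definition closed2 :: "(real^4) set \<Rightarrow> form2 \<Rightarrow> bool" where
  "closed2 U F \<longleftrightarrow> (\<forall>x\<in>U. \<forall>a b c.
      pd a (\<lambda>y. F y b c) x + pd b (\<lambda>y. F y c a) x + pd c (\<lambda>y. F y a b) x = 0)"

definition raise2 :: "metric \<Rightarrow> form2 \<Rightarrow> real^4 \<Rightarrow> 4 \<Rightarrow> 4 \<Rightarrow> real" where
  "raise2 g F x m n = (\<Sum>a\<in>UNIV. \<Sum>b\<in>UNIV. ginv g x $ m $ a * ginv g x $ n $ b * F x a b)"

text \<open>Current density j^nu = - nabla_mu F^{mu nu}.\<close>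
definition current :: "metric \<Rightarrow> form2 \<Rightarrow> real^4 \<Rightarrow> real^4" where
  "current g F x = (\<chi> \<nu>. - ((\<Sum>\<mu>\<in>UNIV. pd \<mu> (\<lambda>y. raise2 g F y \<mu> \<nu>) x)
      + (\<Sum>\<mu>\<in>UNIV. \<Sum>l\<in>UNIV. christ g x \<mu> \<mu> l * raise2 g F x l \<nu>)
      + (\<Sum>\<mu>\<in>UNIV. \<Sum>l\<in>UNIV. christ g x \<nu> \<mu> l * raise2 g F x \<mu> l)))"

definition force_free :: "(real^4) set \<Rightarrow> metric \<Rightarrow> form2 \<Rightarrow> bool" where
  "force_free U g F \<longleftrightarrow> (\<forall>x\<in>U. \<forall>v :: real^4.
      (\<Sum>a\<in>UNIV. \<Sum>b\<in>UNIV. F x a b * current g F x $ a * v $ b) = 0)"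

definition mag_dominated :: "(real^4) set \<Rightarrow> metric \<Rightarrow> form2 \<Rightarrow> bool" where
  "mag_dominated U g F \<longleftrightarrow> (\<forall>x\<in>U. (\<Sum>a\<in>UNIV. \<Sum>b\<in>UNIV. F x a b * raise2 g F x a b) > 0)"

definition ker2 :: "form2 \<Rightarrow> real^4 \<Rightarrow> (real^4) set" where
  "ker2 F x = {v. \<forall>b. (\<Sum>a\<in>UNIV. v $ a * F x a b) = 0}"

end

theory Submission
  imports Defs
begin

text \<open>Raising both indices of \<open>F = u e\<^sub>2\<^sup>\<flat> \<and> e\<^sub>3\<^sup>\<flat>\<close> gives the bivector
\<open>u (e\<^sub>2 \<otimes> e\<^sub>3 - e\<^sub>3 \<otimes> e\<^sub>2)\<close>. In \<open>\<nabla>\<^sub>\<mu> F\<^sup>\<mu>\<^sup>\<nu>\<close> the Christoffel term contracting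
\<open>F\<^sup>\<mu>\<^sup>l\<close> against the symmetric \<open>\<Gamma>\<^sup>\<nu>\<^sub>\<mu>\<^sub>l\<close> drops out, and the Leibniz rule gives
\<open>j = div(u e\<^sub>3) e\<^sub>2 - div(u e\<^sub>2) e\<^sub>3 - u [e\<^sub>2, e\<^sub>3]\<close>. Involutivity puts \<open>[e\<^sub>2, e\<^sub>3]\<close>
into \<open>span {e\<^sub>2, e\<^sub>3}\<close>, hence \<open>j\<close> lies there too. On the other hand
\<open>F(j, \<cdot>) = u (g(j, e\<^sub>2) e\<^sub>3\<^sup>\<flat> - g(j, e\<^sub>3) e\<^sub>2\<^sup>\<flat>)\<close>, so force-freeness together with
\<open>u \<noteq> 0\<close> (magnetic domination) forces \<open>g(j, e\<^sub>2) = g(j, e\<^sub>3) = 0\<close>, i.e. \<open>j = 0\<close>.\<close>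

lemma matrix_inv_left:
  fixes A :: "'a::semiring_1^'n^'n"
  shows "invertible A \<Longrightarrow> matrix_inv A ** A = mat 1"
  unfolding invertible_def matrix_inv_def by (metis (mono_tags, lifting) someI_ex)

lemma sum_product_antisym:
  fixes G H p q :: "'n::finite \<Rightarrow> real"
  shows "(\<Sum>a\<in>UNIV. \<Sum>b\<in>UNIV. G a * H b * (c * (p a * q b - p b * q a)))
     = c * ((\<Sum>a\<in>UNIV. G a * p a) * (\<Sum>b\<in>UNIV. H b * q b) - (\<Sum>a\<in>UNIV. G a * q a) * (\<Sum>b\<in>UNIV. H b * p b))"
proof -
  have "(\<Sum>a\<in>UNIV. \<Sum>b\<in>UNIV. G a * H b * (c * (p a * q b - p b * q a)))
     = c * (\<Sum>a\<in>UNIV. \<Sum>b\<in>UNIV. (G a * p a) * (H b * q b))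
       - c * (\<Sum>a\<in>UNIV. \<Sum>b\<in>UNIV. (G a * q a) * (H b * p b))"
    by (simp add: sum_subtractf sum_distrib_left algebra_simps)
  then show ?thesis
    by (simp add: sum_product right_diff_distrib)
qed

lemma sum_symmetric_antisymmetric:
  fixes c r :: "'n::finite \<Rightarrow> 'n \<Rightarrow> real"
  assumes "\<And>i j. c i j = c j i" "\<And>i j. r i j = - r j i"
  shows "(\<Sum>i\<in>UNIV. \<Sum>j\<in>UNIV. c i j * r i j) = 0"
proof -
  let ?S = "\<Sum>i\<in>UNIV. \<Sum>j\<in>UNIV. c i j * r i j"
  have "?S = (\<Sum>j\<in>UNIV. \<Sum>i\<in>UNIV. c i j * r i j)"
    by (rule sum.swap)
  also have "\<dots> = (\<Sum>j\<in>UNIV. \<Sum>i\<in>UNIV. - (c j i * r j i))"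
    by (intro sum.cong refl) (metis assms mult_minus_right)
  also have "\<dots> = - ?S"
    by (simp add: sum_negf)
  finally show ?thesis
    by simp
qed

text \<open>The Leibniz expansion of \<open>\<partial>\<^sub>m (u (a\<^sup>m b\<^sup>n - b\<^sup>m a\<^sup>n)) + \<Gamma>\<^sup>m\<^sub>m\<^sub>l u (a\<^sup>l b\<^sup>n - b\<^sup>l a\<^sup>n)\<close>,
regrouped into divergence terms and the Lie bracket.\<close>

lemma bivector_divergence_identity:
  fixes du a b da db a' b' :: "'n::finite \<Rightarrow> real" and G :: "'n \<Rightarrow> 'n \<Rightarrow> real"
  shows "(\<Sum>m\<in>UNIV. du m * (a m * bn - b m * an)
            + u * ((da m * bn + a m * b' m) - (db m * an + b m * a' m)))
     + (\<Sum>m\<in>UNIV. \<Sum>l\<in>UNIV. G m l * (u * (a l * bn - b l * an)))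
   = ((\<Sum>m\<in>UNIV. a m * du m) + u * ((\<Sum>m\<in>UNIV. da m) + (\<Sum>m\<in>UNIV. \<Sum>l\<in>UNIV. G m l * a l))) * bn
     - ((\<Sum>m\<in>UNIV. b m * du m) + u * ((\<Sum>m\<in>UNIV. db m) + (\<Sum>m\<in>UNIV. \<Sum>l\<in>UNIV. G m l * b l))) * an
     + u * (\<Sum>m\<in>UNIV. a m * b' m - b m * a' m)"
  by (simp add: sum.distrib sum_subtractf sum_distrib_left sum_distrib_right algebra_simps)

lemma pd_mult:
  assumes "f differentiable (at x)" "h differentiable (at x)"
  shows "pd i (\<lambda>y. f y * h y) x = pd i f x * h x + f x * pd i h x"
  using frechet_derivative_at[OF has_derivative_mult[OF assms[THEN frechet_derivative_works[THEN iffD1]]], symmetric]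
  unfolding pd_def by (simp add: algebra_simps)

lemma pd_diff:
  assumes "f differentiable (at x)" "h differentiable (at x)"
  shows "pd i (\<lambda>y. f y - h y) x = pd i f x - pd i h x"
  using frechet_derivative_at[OF has_derivative_diff[OF assms[THEN frechet_derivative_works[THEN iffD1]]], symmetric]
  unfolding pd_def by simp

lemma pd_transform_within_open:
  assumes "f differentiable (at x)" "open U" "x \<in> U" "\<And>y. y \<in> U \<Longrightarrow> f y = h y"
  shows "pd i f x = pd i h x"
  unfolding pd_def using frechet_derivative_transform_within_open[OF assms] by simp

lemma smooth_on_differentiable: "smooth_on U f \<Longrightarrow> x \<in> U \<Longrightarrow> f differentiable (at x)"
  unfolding smooth_on_def by (metis Ck.simps(2))

lemma pd_bivector:
  assumes "u differentiable (at x)"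
    and "\<forall>k. (\<lambda>y. X y $ k) differentiable (at x)" "\<forall>k. (\<lambda>y. Y y $ k) differentiable (at x)"
  shows "pd m (\<lambda>y. u y * (X y $ a * Y y $ b - Y y $ a * X y $ b)) x
    = pd m u x * (X x $ a * Y x $ b - Y x $ a * X x $ b)
      + u x * ((pd m (\<lambda>y. X y $ a) x * Y x $ b + X x $ a * pd m (\<lambda>y. Y y $ b) x)
             - (pd m (\<lambda>y. Y y $ a) x * X x $ b + Y x $ a * pd m (\<lambda>y. X y $ b) x))"
  using assms by (simp add: pd_mult pd_diff differentiable_mult differentiable_diff)

lemma orthonormal_frame_invertible:
  assumes "orthonormal_frame U g e" "x \<in> U"
  shows "invertible (g x)"
proof -
  define M where "M = (\<chi> a \<mu>. e \<mu> x $ a)"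
  define \<eta> :: "real^4^4" where "\<eta> = (\<chi> \<mu> \<nu>. if \<mu> = \<nu> then (if \<mu> = 0 then -1 else 1) else 0)"
  have "(transpose M ** g x ** M) $ \<mu> $ \<nu> = gdot g x (e \<mu> x) (e \<nu> x)" for \<mu> \<nu>
    unfolding M_def gdot_def matrix_matrix_mult_def transpose_def
    by (simp add: sum_distrib_right, subst sum.swap) (simp add: mult_ac)
  then have "transpose M ** g x ** M = \<eta>"
    using assms unfolding orthonormal_frame_def \<eta>_def by (simp add: vec_eq_iff)
  moreover have "det \<eta> \<noteq> 0"
    by (subst det_diagonal) (auto simp: \<eta>_def)
  ultimately have "det M * det (g x) * det M \<noteq> 0"
    by (metis det_mul det_transpose)
  then show ?thesis
    by (simp add: invertible_det_nz)
qed

lemma ginv_flat: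
  assumes "invertible (g x)"
  shows "(\<Sum>a\<in>UNIV. ginv g x $ m $ a * flat g X x $ a) = X x $ m"
proof -
  have "flat g X x = g x *v X x"
    by (simp add: flat_def matrix_vector_mult_def vec_eq_iff)
  then have "(\<Sum>a\<in>UNIV. ginv g x $ m $ a * flat g X x $ a) = (ginv g x *v (g x *v X x)) $ m"
    by (simp add: matrix_vector_mult_def)
  also have "\<dots> = X x $ m"
    using matrix_inv_left[OF assms] by (simp add: matrix_vector_mul_assoc ginv_def)
  finally show ?thesis .
qed

lemma raise2_wedge:
  assumes "invertible (g x)"
    and "\<forall>a b. F x a b = u x * wedge (flat g X) (flat g Y) x a b"
  shows "raise2 g F x m n = u x * (X x $ m * Y x $ n - Y x $ m * X x $ n)"
  using assms(2) unfolding raise2_def wedge_def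
  by (simp add: sum_product_antisym ginv_flat[of g x, OF assms(1)])

lemma christ_symmetric:
  assumes "open U" "x \<in> U" "\<forall>y\<in>U. \<forall>a b. g y $ a $ b = g y $ b $ a"
    and "\<forall>a b. (\<lambda>y. g y $ a $ b) differentiable (at x)"
  shows "christ g x k i j = christ g x k j i"
proof -
  have "pd l (\<lambda>y. g y $ i $ j) x = pd l (\<lambda>y. g y $ j $ i) x" for l
    using assms by (intro pd_transform_within_open[of _ x U]) auto
  then show ?thesis
    unfolding christ_def by (simp add: algebra_simps)
qed

definition dir_deriv :: "vfield \<Rightarrow> (real^4 \<Rightarrow> real) \<Rightarrow> real^4 \<Rightarrow> real" where
  "dir_deriv X f x = (\<Sum>m\<in>UNIV. X x $ m * pd m f x)"

definition divergence :: "metric \<Rightarrow> vfield \<Rightarrow> real^4 \<Rightarrow> real" where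
  "divergence g X x = (\<Sum>m\<in>UNIV. pd m (\<lambda>y. X y $ m) x)
     + (\<Sum>m\<in>UNIV. \<Sum>l\<in>UNIV. christ g x m m l * X x $ l)"

lemma current_wedge:
  assumes U: "open U" "x \<in> U"
    and g_sym: "\<forall>y\<in>U. \<forall>a b. g y $ a $ b = g y $ b $ a"
    and g_inv: "\<forall>y\<in>U. invertible (g y)"
    and dg: "\<forall>a b. (\<lambda>y. g y $ a $ b) differentiable (at x)"
    and du: "u differentiable (at x)"
    and dX: "\<forall>k. (\<lambda>y. X y $ k) differentiable (at x)"
    and dY: "\<forall>k. (\<lambda>y. Y y $ k) differentiable (at x)"
    and F: "\<forall>y\<in>U. \<forall>a b. F y a b = u y * wedge (flat g X) (flat g Y) y a b"
  shows "current g F x = (dir_deriv Y u x + u x * divergence g Y x) *\<^sub>R X x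
    - (dir_deriv X u x + u x * divergence g X x) *\<^sub>R Y x - u x *\<^sub>R lie X Y x"
proof -
  have raise: "raise2 g F y m n = u y * (X y $ m * Y y $ n - Y y $ m * X y $ n)"
    if "y \<in> U" for y m n
    using that g_inv F by (intro raise2_wedge) auto
  have pd_raise: "pd m (\<lambda>y. raise2 g F y m n) x
      = pd m (\<lambda>y. u y * (X y $ m * Y y $ n - Y y $ m * X y $ n)) x" for m n
    using U du dX dY raise
    by (intro pd_transform_within_open[symmetric]) (auto intro!: differentiable_mult differentiable_diff)
  have christ_raise: "(\<Sum>m\<in>UNIV. \<Sum>l\<in>UNIV. christ g x n m l * raise2 g F x m l) = 0" for n
    by (rule sum_symmetric_antisymmetric)
      (rule christ_symmetric[OF U g_sym dg], simp add: raise[OF U(2)] algebra_simps)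
  have current_component: "current g F x $ n = - ((dir_deriv X u x + u x * divergence g X x) * Y x $ n
      - (dir_deriv Y u x + u x * divergence g Y x) * X x $ n + u x * lie X Y x $ n)" for n
  proof -
    have "current g F x $ n = - ((\<Sum>m\<in>UNIV. pd m (\<lambda>y. raise2 g F y m n) x)
        + (\<Sum>m\<in>UNIV. \<Sum>l\<in>UNIV. christ g x m m l * raise2 g F x l n))"
      unfolding current_def using christ_raise[of n] by simp
    also have "\<dots> = - ((dir_deriv X u x + u x * divergence g X x) * Y x $ n
        - (dir_deriv Y u x + u x * divergence g Y x) * X x $ n + u x * lie X Y x $ n)"
      unfolding pd_raise pd_bivector[OF du dX dY] raise[OF U(2)]
        dir_deriv_def divergence_def lie_def
      by (subst bivector_divergence_identity) simp
    finally show ?thesis .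
  qed
  have "current g F x $ n = ((dir_deriv Y u x + u x * divergence g Y x) *\<^sub>R X x
    - (dir_deriv X u x + u x * divergence g X x) *\<^sub>R Y x - u x *\<^sub>R lie X Y x) $ n" for n
    unfolding current_component by (simp add: algebra_simps)
  then show ?thesis
    by (simp add: vec_eq_iff)
qed

lemma gdot_add_scaleR_left:
  "gdot g x (c *\<^sub>R y + d *\<^sub>R z) w = c * gdot g x y w + d * gdot g x z w"
  unfolding gdot_def by (simp add: sum.distrib sum_distrib_left algebra_simps)

lemma wedge_flat_contraction:
  assumes "\<forall>a b. F x a b = u x * wedge (flat g X) (flat g Y) x a b"
  shows "(\<Sum>a\<in>UNIV. \<Sum>b\<in>UNIV. F x a b * w $ a * v $ b)
    = u x * (gdot g x w (X x) * gdot g x v (Y x) - gdot g x w (Y x) * gdot g x v (X x))"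
proof -
  have flat_gdot: "(\<Sum>a\<in>UNIV. z $ a * flat g Z x $ a) = gdot g x z (Z x)" for z Z
    unfolding flat_def gdot_def by (simp add: sum_distrib_left algebra_simps)
  have "(\<Sum>a\<in>UNIV. \<Sum>b\<in>UNIV. F x a b * w $ a * v $ b)
    = (\<Sum>a\<in>UNIV. \<Sum>b\<in>UNIV. w $ a * v $ b *
        (u x * (flat g X x $ a * flat g Y x $ b - flat g X x $ b * flat g Y x $ a)))"
    using assms by (intro sum.cong refl) (simp add: wedge_def)
  then show ?thesis
    by (simp add: sum_product_antisym flat_gdot)
qed

lemma wedge_kernel_inter_span_eq_0:
  assumes F: "\<forall>a b. F x a b = u x * wedge (flat g X) (flat g Y) x a b"
    and u: "u x \<noteq> 0"
    and orth: "gdot g x (X x) (X x) = 1" "gdot g x (Y x) (Y x) = 1"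
      "gdot g x (X x) (Y x) = 0" "gdot g x (Y x) (X x) = 0"
    and ker: "\<forall>v. (\<Sum>a\<in>UNIV. \<Sum>b\<in>UNIV. F x a b * w $ a * v $ b) = 0"
    and w: "w \<in> span {X x, Y x}"
  shows "w = 0"
proof -
  obtain p where "w - p *\<^sub>R X x \<in> span {Y x}"
    using w span_breakdown_eq by blast
  then obtain q where "w - p *\<^sub>R X x = q *\<^sub>R Y x"
    by (auto simp: span_singleton)
  then have w_eq: "w = p *\<^sub>R X x + q *\<^sub>R Y x"
    by (simp add: algebra_simps)
  have "u x * p = 0"
    using ker wedge_flat_contraction[of F x u g X Y w "Y x", OF F]
    by (simp add: w_eq gdot_add_scaleR_left orth)
  moreover have "u x * q = 0"
    using ker wedge_flat_contraction[of F x u g X Y w "X x", OF F]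
    by (simp add: w_eq gdot_add_scaleR_left orth)
  ultimately show ?thesis
    using u w_eq by simp
qed

theorem corollary1:
  fixes U :: "(real^4) set" and g :: metric and e :: "4 \<Rightarrow> vfield"
    and u :: "real^4 \<Rightarrow> real" and F :: form2
  assumes U: "open U" "starlike U"
    and g_sym: "\<forall>x\<in>U. \<forall>a b. g x $ a $ b = g x $ b $ a"
    and g_smooth: "smooth_metric U g"
    and e_smooth: "\<forall>\<mu>. smooth_vf U (e \<mu>)"
    and frame: "orthonormal_frame U g e"
    and foliation: "involutive2 U (e 0) (e 1)"
    and H_cond: "\<forall>x\<in>U. \<forall>a b. d1 (flat g (Hvec g e)) x a b = - d1 (flat g (Htil g e)) x a b"
    and u_smooth: "smooth_on U u"
    and F_def: "\<forall>x\<in>U. \<forall>a b. F x a b = u x * wedge (flat g (e 2)) (flat g (e 3)) x a b"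
    and F_closed: "closed2 U F"
    and F_ff: "force_free U g F"
    and F_md: "mag_dominated U g F"
    and F_ker: "\<forall>x\<in>U. ker2 F x = span {e 0 x, e 1 x}"
    and invol: "involutive2 U (e 2) (e 3)"
  shows "\<forall>x\<in>U. current g F x = 0"
proof
  fix x assume x: "x \<in> U"
  have g_inv: "\<forall>y\<in>U. invertible (g y)"
    using frame orthonormal_frame_invertible by blast
  have dg: "\<forall>a b. (\<lambda>y. g y $ a $ b) differentiable (at x)"
    using g_smooth x smooth_on_differentiable unfolding smooth_metric_def by blast
  have du: "u differentiable (at x)"
    using u_smooth x smooth_on_differentiable by blast
  have de: "\<forall>k. (\<lambda>y. e \<mu> y $ k) differentiable (at x)" for \<mu>
    using e_smooth x smooth_on_differentiable unfolding smooth_vf_def by blast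
  have current: "current g F x = (dir_deriv (e 3) u x + u x * divergence g (e 3) x) *\<^sub>R e 2 x
      - (dir_deriv (e 2) u x + u x * divergence g (e 2) x) *\<^sub>R e 3 x - u x *\<^sub>R lie (e 2) (e 3) x"
    by (rule current_wedge[OF U(1) x g_sym g_inv dg du de de F_def])
  have "lie (e 2) (e 3) x \<in> span {e 2 x, e 3 x}"
    using invol x unfolding involutive2_def by blast
  then have "current g F x \<in> span {e 2 x, e 3 x}"
    unfolding current by (auto intro!: span_diff span_scale simp: span_base)
  moreover have "u x \<noteq> 0"
    using F_md x F_def unfolding mag_dominated_def by fastforce
  ultimately show "current g F x = 0"
    using F_def F_ff frame x unfolding force_free_def orthonormal_frame_def
    by (intro wedge_kernel_inter_span_eq_0[of F x u g "e 2" "e 3"]) auto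
qed

end
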